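(* Let $T$ be a finite tree with $n$ simplices (vertices plus edges), and let $D$ be a persistence diagram consistent with $T$. Then there exists a discrete Morse function $f\colon T\to[0,n]$ whose induced (degree-$0$) persistence diagram satisfies $D_f=D$.
   Context: For a finite simple graph $G$, its simplices are its vertices and edges; write $v<e$ if vertex $v$ is an endpoint of edge $e$. Let $n$ be the total number of simplices. A discrete Morse function is a function $f$ from the set of simplices of $G$ to $[0,n]$ such that: (i) $v<e$ implies $f(v)\le f(e)$; (ii) $\min f=0$; (iii) every value is attained by at most two simplices, and if $f(\sigma)=f(\tau)$ with $\sigma\neq\tau$ then one of $\sigma,\tau$ is an endpoint of the other; (iv) if a value $f(\sigma)$ is attained only by $\sigma$, then $f(\sigma)\in\mathbb{N}$. Such $\sigma$ is called critical and $f(\sigma)$ a critical value. For $a\in\mathbb{R}$ the level subcomplex is $G_a=\{\sigma: f(\sigma)\le a\}$ (a subgraph). If $c_0<c_1<\dots<c_{m-1}$ are the critical values, $f$ induces the filtration $G_{c_0}\subseteq\dots\subseteq G_{c_{m-1}}$, and its persistent homology (over a field) gives a persistence diagram $D_f$: the multiset of pairs (birth value, death value) of homology classes, with death value $\infty$ for classes that never die. For a tree only degree-$0$ homology occurs. A persistence diagram $D=\{(c_i,d_i)\}$ (a finite set of pairs) is consistent with a tree $T$ on $n$ simplices if $(0,\infty)\in D$ and for all $c_i,d_j$ occurring in pairs of $D\setminus\{(0,\infty)\}$: $c_i,d_j\in\mathbb{Z}$; $1\le c_i,d_j\le n$; $c_i<d_i$ and $c_i<c_j$ for $i<j$; and all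 the numbers $c_i,d_j$ are pairwise distinct. *)

theory Defs
  imports Complex_Main "HOL-Library.Multiset" "HOL-Library.Extended_Real"
begin

text \<open>Simplices are represented as sets: a vertex v is the simplex {v},
an edge is {u,w}. The face relation v < e is then {v} \<subset> e, i.e. v \<in> e.\<close>

definition simple_graph :: "'a set \<Rightarrow> 'a set set \<Rightarrow> bool" where
  "simple_graph V E \<longleftrightarrow> finite V \<and> (\<forall>e\<in>E. \<exists>u w. u \<in> V \<and> w \<in> V \<and> u \<noteq> w \<and> e = {u, w})"

definition graph_connected :: "'a set \<Rightarrow> 'a set set \<Rightarrow> bool" where
  "graph_connected V E \<longleftrightarrow> (\<forall>u\<in>V. \<forall>w\<in>V. (\<lambda>x y. {x, y} \<in> E)\<^sup>*\<^sup>* u w)"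

definition is_cycle :: "'a set set \<Rightarrow> 'a list \<Rightarrow> bool" where
  "is_cycle E vs \<longleftrightarrow> length vs \<ge> 3 \<and> distinct vs \<and>
     (\<forall>i < length vs. {vs ! i, vs ! ((i + 1) mod length vs)} \<in> E)"

definition acyclic_graph :: "'a set \<Rightarrow> 'a set set \<Rightarrow> bool" where
  "acyclic_graph V E \<longleftrightarrow> \<not> (\<exists>vs. set vs \<subseteq> V \<and> is_cycle E vs)"

definition is_tree :: "'a set \<Rightarrow> 'a set set \<Rightarrow> bool" where
  "is_tree V E \<longleftrightarrow> simple_graph V E \<and> V \<noteq> {} \<and> graph_connected V E \<and> acyclic_graph V E"

definition simplices :: "'a set \<Rightarrow> 'a set set \<Rightarrow> 'a set set" where
  "simplices V E = (\<lambda>v. {v}) ` V \<union> E"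

definition discrete_morse :: "'a set \<Rightarrow> 'a set set \<Rightarrow> ('a set \<Rightarrow> real) \<Rightarrow> bool" where
  "discrete_morse V E f \<longleftrightarrow>
     (let S = simplices V E; n = card S in
       (\<forall>\<sigma>\<in>S. 0 \<le> f \<sigma> \<and> f \<sigma> \<le> real n) \<and>
       (\<forall>v\<in>V. \<forall>e\<in>E. v \<in> e \<longrightarrow> f {v} \<le> f e) \<and>
       (\<exists>\<sigma>\<in>S. f \<sigma> = 0) \<and>
       (\<forall>x. card {\<sigma>\<in>S. f \<sigma> = x} \<le> 2) \<and>
       (\<forall>\<sigma>\<in>S. \<forall>\<tau>\<in>S. \<sigma> \<noteq> \<tau> \<and> f \<sigma> = f \<tau> \<longrightarrow> \<sigma> \<subset> \<tau> \<or> \<tau> \<subset> \<sigma>) \<and>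
       (\<forall>\<sigma>\<in>S. (\<forall>\<tau>\<in>S. f \<tau> = f \<sigma> \<longrightarrow> \<tau> = \<sigma>) \<longrightarrow> f \<sigma> \<in> \<nat>))"

definition critical_values :: "'a set set \<Rightarrow> ('a set \<Rightarrow> real) \<Rightarrow> real set" where
  "critical_values S f = {f \<sigma> | \<sigma>. \<sigma> \<in> S \<and> (\<forall>\<tau>\<in>S. f \<tau> = f \<sigma> \<longrightarrow> \<tau> = \<sigma>)}"

definition level :: "'a set set \<Rightarrow> ('a set \<Rightarrow> real) \<Rightarrow> real \<Rightarrow> 'a set set" where
  "level S f a = {\<sigma>\<in>S. f \<sigma> \<le> a}"

text \<open>For a subcomplex K (set of simplices), its vertices, its connected components,
and the rank of the map H_0(X) \<rightarrow> H_0(Y) induced by inclusion X \<subseteq> Y, which equals the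
number of components of Y that contain a vertex of X.\<close>

definition cverts :: "'a set set \<Rightarrow> 'a set" where
  "cverts K = {v. {v} \<in> K}"

definition creach :: "'a set set \<Rightarrow> 'a \<Rightarrow> 'a \<Rightarrow> bool" where
  "creach K = (\<lambda>x y. x \<noteq> y \<and> {x, y} \<in> K)\<^sup>*\<^sup>*"

definition ccomp :: "'a set set \<Rightarrow> 'a \<Rightarrow> 'a set" where
  "ccomp K v = {w. creach K v w}"

definition rank_H0 :: "'a set set \<Rightarrow> 'a set set \<Rightarrow> nat" where
  "rank_H0 X Y = card (ccomp Y ` cverts X)"

text \<open>Persistence diagram of a filtration Ks ! 0 \<subseteq> ... \<subseteq> Ks ! (m-1) with filtration
values c 0 < ... < c (m-1): the multiplicity of (c i, c j) is obtained from the
persistent Betti numbers by the usual inclusion-exclusion formula.\<close>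

definition pbetti :: "'a set set list \<Rightarrow> nat \<Rightarrow> nat \<Rightarrow> int" where
  "pbetti Ks i j = int (rank_H0 (Ks ! i) (Ks ! j))"

definition pbetti_before :: "'a set set list \<Rightarrow> nat \<Rightarrow> nat \<Rightarrow> int" where
  "pbetti_before Ks i j = (if i = 0 then 0 else pbetti Ks (i - 1) j)"

definition pers_diagram :: "'a set set list \<Rightarrow> real list \<Rightarrow> (real \<times> ereal) multiset" where
  "pers_diagram Ks cs =
     (let m = length Ks in
       (\<Sum>i<m. \<Sum>j\<in>{i<..<m}.
          replicate_mset (nat (pbetti Ks i (j - 1) - pbetti Ks i j
                               - pbetti_before Ks i (j - 1) + pbetti_before Ks i j))
            (cs ! i, ereal (cs ! j)))
     + (\<Sum>i<m. replicate_mset (nat (pbetti Ks i (m - 1) - pbetti_before Ks i (m - 1)))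
            (cs ! i, PInfty)))"

definition morse_diagram :: "'a set \<Rightarrow> 'a set set \<Rightarrow> ('a set \<Rightarrow> real) \<Rightarrow> (real \<times> ereal) multiset" where
  "morse_diagram V E f =
     (let S = simplices V E;
          cs = sorted_list_of_set (critical_values S f)
      in pers_diagram (map (level S f) cs) cs)"

definition consistent_diagram :: "(real \<times> ereal) set \<Rightarrow> nat \<Rightarrow> bool" where
  "consistent_diagram D n \<longleftrightarrow>
     finite D \<and> (0, PInfty) \<in> D \<and>
     (\<forall>p\<in>D - {(0, PInfty)}.
        fst p \<in> \<int> \<and> (\<exists>d\<in>\<int>. snd p = ereal d) \<and>
        1 \<le> fst p \<and> fst p \<le> real n \<and> 1 \<le> snd p \<and> snd p \<le> ereal (real n) \<and>
        ereal (fst p) < snd p) \<and>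
     (\<forall>p\<in>D - {(0, PInfty)}. \<forall>q\<in>D - {(0, PInfty)}.
        ereal (fst p) \<noteq> snd q \<and> (p \<noteq> q \<longrightarrow> fst p \<noteq> fst q \<and> snd p \<noteq> snd q))"

end

theory Submission
  imports Defs
begin

text \<open>
Grow the tree one leaf at a time from a root \<open>v\<^sub>0\<close>, giving an ordering
\<open>v\<^sub>0, ..., v\<^bsub>N-1\<^esub>\<close> in which every \<open>v\<^sub>i\<close> (\<open>i > 0\<close>) has its parent
\<open>v\<^bsub>par i\<^esub>\<close> earlier; the edge to the parent is the edge of \<open>v\<^sub>i\<close>.
If \<open>D\<close> has \<open>k\<close> finite points, consistency forces \<open>2k \<le> 2N - 1\<close>, so \<open>m = N - 1 - k \<ge> 0\<close>.
The vertices \<open>v\<^sub>1, ..., v\<^sub>m\<close> are paired with their edges at the non-integral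
values \<open>i/N\<close>; vertex and edge number \<open>m + 1 + t\<close> receive the birth and the death of
the point of \<open>D\<close> with the \<open>t\<close>-th smallest death. Edge values then increase away
from the root, so in every sublevel graph the vertices whose edge is missing are
isolated and all others lie in the component of the root. Hence the rank of
\<open>H\<^sub>0(G\<^sub>s) \<rightarrow> H\<^sub>0(G\<^sub>t)\<close> is one plus the number of points with
\<open>b \<le> s\<close> and \<open>t < d\<close>, and inclusion-exclusion recovers exactly \<open>D\<close>.
\<close>

section \<open>Growing a tree along a parent order\<close>

lemma rtranclp_leaves_set:
  assumes "R\<^sup>*\<^sup>* a b" "a \<in> A" "b \<notin> A"
  shows "\<exists>u w. R u w \<and> u \<in> A \<and> w \<notin> A"
  using assms by (induction rule: rtranclp_induct) auto

lemma rtranclp_distinct_path: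
  assumes "R\<^sup>*\<^sup>* a b"
  shows "\<exists>p. p \<noteq> [] \<and> distinct p \<and> hd p = a \<and> last p = b \<and>
     (\<forall>i. Suc i < length p \<longrightarrow> R (p ! i) (p ! Suc i))"
  using assms
proof (induction rule: converse_rtranclp_induct)
  case base
  then show ?case by (intro exI[of _ "[b]"]) auto
next
  case (step a c)
  then obtain p where p: "p \<noteq> []" "distinct p" "hd p = c" "last p = b"
    "\<forall>i. Suc i < length p \<longrightarrow> R (p ! i) (p ! Suc i)" by blast
  show ?case
  proof (cases "a \<in> set p")
    case False
    have "R ((a # p) ! i) ((a # p) ! Suc i)" if "Suc i < length (a # p)" for i
      using that p step(1) by (cases i) (auto simp: hd_conv_nth)
    then show ?thesis using p False by (intro exI[of _ "a # p"]) auto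
  next
    case True
    then obtain j where "j < length p" "p ! j = a" by (auto simp: in_set_conv_nth)
    then show ?thesis using p by (intro exI[of _ "drop j p"]) (auto simp: hd_drop_conv_nth)
  qed
qed

lemma rtranclp_along_parents:
  fixes i :: nat
  assumes "\<And>j. j \<in> I \<Longrightarrow> 0 < j \<Longrightarrow> par j < j \<and> par j \<in> I \<and> R (x (par j)) (x j)"
    and "i \<in> I"
  shows "R\<^sup>*\<^sup>* (x 0) (x i)"
  using assms(2)
proof (induction i rule: less_induct)
  case (less i)
  show ?case
  proof (cases "i = 0")
    case False
    then have "par i < i" "par i \<in> I" "R (x (par i)) (x i)" using assms(1) less.prems by auto
    then show ?thesis using less.IH by (meson rtranclp.rtrancl_into_rtrancl)
  qed simp
qed

lemma is_cycle_close_path: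
  assumes p: "p \<noteq> []" "distinct p" "hd p = u" "last p = y"
    "\<forall>i. Suc i < length p \<longrightarrow> {p ! i, p ! Suc i} \<in> E"
    and "u \<noteq> y" "w \<notin> set p" and uw: "{w, u} \<in> E" and yw: "{y, w} \<in> E"
  shows "is_cycle E (w # p)"
proof -
  have len: "length p \<ge> 2"
  proof (rule ccontr)
    assume "\<not> length p \<ge> 2"
    then have "hd p = last p" using p(1) by (cases p) (auto simp: Suc_le_eq)
    then show False using assms by simp
  qed
  have "{(w # p) ! i, (w # p) ! ((i + 1) mod length (w # p))} \<in> E"
    if i: "i < length (w # p)" for i
  proof -
    consider "i = 0" | "0 < i \<and> i < length p" | "i = length p" using i by force
    then show ?thesis
    proof cases
      case 1
      have "p ! 0 = u" using p(1,3) by (simp add: hd_conv_nth)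
      then show ?thesis using 1 len uw p(1) by simp
    next
      case 2
      then have "Suc (i - 1) < length p" by simp
      then show ?thesis using 2 p(5) by (cases i) auto
    next
      case 3
      have "(w # p) ! i = y" using 3 p(1,4) by (cases p rule: rev_cases) auto
      moreover have "(i + 1) mod length (w # p) = 0" using 3 by simp
      ultimately show ?thesis using yw by simp
    qed
  qed
  moreover have "3 \<le> length (w # p)" "distinct (w # p)" using len p(2) assms(7) by auto
  ultimately show ?thesis unfolding is_cycle_def by blast
qed

lemma simple_graph_edge_cases:
  assumes "simple_graph V E" "e \<in> E"
  obtains u w where "u \<in> V" "w \<in> V" "u \<noteq> w" "e = {u, w}"
  using assms unfolding simple_graph_def by metis

lemma simple_graph_edge_subset: "simple_graph V E \<Longrightarrow> e \<in> E \<Longrightarrow> e \<subseteq> V"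
  by (auto elim: simple_graph_edge_cases)

definition parent_edge :: "'a list \<Rightarrow> (nat \<Rightarrow> nat) \<Rightarrow> nat \<Rightarrow> 'a set" where
  "parent_edge vs par i = {vs ! par i, vs ! i}"

definition parent_edges :: "'a list \<Rightarrow> (nat \<Rightarrow> nat) \<Rightarrow> 'a set set" where
  "parent_edges vs par = parent_edge vs par ` {0<..<length vs}"

locale parent_order =
  fixes vs :: "'a list" and par :: "nat \<Rightarrow> nat"
  assumes vs_nonempty: "vs \<noteq> []" and distinct_vs: "distinct vs"
    and par_less: "\<And>i. 0 < i \<Longrightarrow> i < length vs \<Longrightarrow> par i < i"
begin

lemma parent_order_snoc:
  assumes "i < length vs" "w \<notin> set vs"
  shows "parent_order (vs @ [w]) (par(length vs := i))"
  using assms distinct_vs par_less by unfold_locales (auto simp: less_Suc_eq)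

lemma parent_edges_snoc:
  assumes "i < length vs"
  shows "parent_edges (vs @ [w]) (par(length vs := i)) = insert {vs ! i, w} (parent_edges vs par)"
proof -
  have "{0<..<length (vs @ [w])} = insert (length vs) {0<..<length vs}"
    using vs_nonempty by auto
  moreover have "parent_edge (vs @ [w]) (par(length vs := i)) (length vs) = {vs ! i, w}"
    using assms by (simp add: parent_edge_def nth_append)
  moreover have "parent_edge (vs @ [w]) (par(length vs := i)) ` {0<..<length vs} =
      parent_edge vs par ` {0<..<length vs}"
  proof (rule image_cong)
    fix j assume "j \<in> {0<..<length vs}"
    then have "j < length vs" "par j < length vs" using par_less[of j] by auto
    then show "parent_edge (vs @ [w]) (par(length vs := i)) j = parent_edge vs par j"
      by (simp add: parent_edge_def nth_append)
  qed simp
  ultimately show ?thesis unfolding parent_edges_def by (simp only: image_insert)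
qed

lemma induced_prefix_connected:
  assumes induced: "{e\<in>E. e \<subseteq> set vs} = parent_edges vs par" and "u \<in> set vs" "y \<in> set vs"
  shows "(\<lambda>x z. {x, z} \<in> E \<and> x \<in> set vs \<and> z \<in> set vs)\<^sup>*\<^sup>* u y"
proof -
  define Q where "Q x z \<longleftrightarrow> {x, z} \<in> E \<and> x \<in> set vs \<and> z \<in> set vs" for x z
  have "symp Q" unfolding symp_def Q_def by (simp add: insert_commute)
  have root: "Q\<^sup>*\<^sup>* (vs ! 0) (vs ! i)" if "i < length vs" for i
  proof (rule rtranclp_along_parents[where I = "{..<length vs}" and x = "(!) vs"])
    fix j assume j: "j \<in> {..<length vs}" "0 < j"
    then have "parent_edge vs par j \<in> {e\<in>E. e \<subseteq> set vs}"
      unfolding induced parent_edges_def by simp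
    then have "Q (vs ! par j) (vs ! j)" unfolding Q_def parent_edge_def by simp
    then show "par j < j \<and> par j \<in> {..<length vs} \<and> Q (vs ! par j) (vs ! j)"
      using par_less[of j] j by simp
  qed (use that in simp)
  obtain iu iy where "iu < length vs" "vs ! iu = u" "iy < length vs" "vs ! iy = y"
    using assms(2,3) by (auto simp: in_set_conv_nth)
  then have "Q\<^sup>*\<^sup>* u (vs ! 0)" "Q\<^sup>*\<^sup>* (vs ! 0) y"
    using root sympD[OF symp_rtranclp[OF \<open>symp Q\<close>] root] by blast+
  then show ?thesis unfolding Q_def[abs_def] by (rule rtranclp_trans)
qed

lemma tree_unique_neighbour:
  assumes tree: "is_tree V E" and vsV: "set vs \<subseteq> V"
    and induced: "{e\<in>E. e \<subseteq> set vs} = parent_edges vs par"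
    and w: "w \<in> V" "w \<notin> set vs" and uw: "{u, w} \<in> E" "u \<in> set vs"
    and yw: "{y, w} \<in> E" "y \<in> set vs"
  shows "y = u"
proof (rule ccontr)
  assume yu: "y \<noteq> u"
  obtain p where p: "p \<noteq> []" "distinct p" "hd p = u" "last p = y"
    and steps: "\<forall>i. Suc i < length p \<longrightarrow> {p ! i, p ! Suc i} \<in> E \<and> p ! i \<in> set vs \<and> p ! Suc i \<in> set vs"
    using rtranclp_distinct_path[OF induced_prefix_connected[OF induced uw(2) yw(2)]] by blast
  have "set p \<subseteq> set vs"
  proof
    fix z assume "z \<in> set p"
    then obtain j where j: "j < length p" "p ! j = z" by (auto simp: in_set_conv_nth)
    show "z \<in> set vs"
    proof (cases "Suc j < length p")
      case True
      then show ?thesis using steps j by auto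
    next
      case False
      then have "j = length p - 1" using j(1) by simp
      then have "z = last p" using j(2) p(1) by (simp add: last_conv_nth)
      then show ?thesis using p(4) yw(2) by simp
    qed
  qed
  moreover have "is_cycle E (w # p)"
  proof (rule is_cycle_close_path[OF p _ yu[symmetric]])
    show "\<forall>i. Suc i < length p \<longrightarrow> {p ! i, p ! Suc i} \<in> E" using steps by blast
    show "w \<notin> set p" using w(2) \<open>set p \<subseteq> set vs\<close> by blast
    show "{w, u} \<in> E" using uw(1) by (simp add: insert_commute)
  qed (fact yw(1))
  ultimately have "set (w # p) \<subseteq> V" using vsV w(1) by auto
  with \<open>is_cycle E (w # p)\<close> show False
    using tree unfolding is_tree_def acyclic_graph_def by blast
qed

lemma induced_edges_snoc:
  assumes tree: "is_tree V E" and vsV: "set vs \<subseteq> V"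
    and induced: "{e\<in>E. e \<subseteq> set vs} = parent_edges vs par"
    and w: "w \<in> V" "w \<notin> set vs" and uw: "{u, w} \<in> E" "u \<in> set vs"
  shows "{e\<in>E. e \<subseteq> set (vs @ [w])} = insert {u, w} {e\<in>E. e \<subseteq> set vs}"
proof (intro equalityI subsetI)
  fix e assume e: "e \<in> {e\<in>E. e \<subseteq> set (vs @ [w])}"
  have sg: "simple_graph V E" using tree unfolding is_tree_def by simp
  obtain a c where ac: "e = {a, c}" "a \<noteq> c"
    using simple_graph_edge_cases[OF sg] e by (metis (no_types, lifting) mem_Collect_eq)
  show "e \<in> insert {u, w} {e\<in>E. e \<subseteq> set vs}"
  proof (cases "w \<in> e")
    case True
    then obtain y where "e = {y, w}" "y \<in> set vs" using e ac by auto
    then show ?thesis using tree_unique_neighbour[OF tree vsV induced w uw] e by auto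
  qed (use e in auto)
qed (use uw in auto)

end

lemma tree_parent_order_prefix:
  assumes tree: "is_tree V E" and "Suc k \<le> card V"
  shows "\<exists>vs par. parent_order vs par \<and> length vs = Suc k \<and> set vs \<subseteq> V \<and>
           {e\<in>E. e \<subseteq> set vs} = parent_edges vs par"
  using assms(2)
proof (induction k)
  case 0
  have sg: "simple_graph V E" and "V \<noteq> {}" using tree unfolding is_tree_def by auto
  then obtain r where "r \<in> V" by auto
  moreover have "{e\<in>E. e \<subseteq> {r}} = {}" using sg by (auto elim!: simple_graph_edge_cases)
  ultimately show ?case
    by (intro exI[of _ "[r]"] exI[of _ id]) (auto simp: parent_order_def parent_edges_def)
next
  case (Suc k)
  have sg: "simple_graph V E" and conn: "graph_connected V E"
    using tree unfolding is_tree_def by auto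
  from Suc obtain vs par where po: "parent_order vs par" and len: "length vs = Suc k"
    and vsV: "set vs \<subseteq> V" and induced: "{e\<in>E. e \<subseteq> set vs} = parent_edges vs par" by auto
  interpret parent_order vs par by (fact po)
  have "card (set vs) < card V" using Suc.prems len distinct_card[OF distinct_vs] by simp
  then have "set vs \<noteq> V" by auto
  then obtain x where x: "x \<in> V" "x \<notin> set vs" using vsV by blast
  have root: "vs ! 0 \<in> set vs" using vs_nonempty by simp
  then have "(\<lambda>a c. {a, c} \<in> E)\<^sup>*\<^sup>* (vs ! 0) x"
    using conn x(1) vsV unfolding graph_connected_def by blast
  then obtain u w where uw: "{u, w} \<in> E" "u \<in> set vs" "w \<notin> set vs"
    using rtranclp_leaves_set[OF _ root x(2)] by blast
  have wV: "w \<in> V" using simple_graph_edge_subset[OF sg uw(1)] by simp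
  obtain i where i: "i < length vs" "vs ! i = u" using uw(2) by (auto simp: in_set_conv_nth)
  have "{e\<in>E. e \<subseteq> set (vs @ [w])} = insert {u, w} {e\<in>E. e \<subseteq> set vs}"
    by (rule induced_edges_snoc[OF tree vsV induced wV uw(3,1,2)])
  then have "{e\<in>E. e \<subseteq> set (vs @ [w])} = parent_edges (vs @ [w]) (par(length vs := i))"
    using parent_edges_snoc[OF i(1)] induced i(2) by (simp add: insert_commute)
  moreover have "length (vs @ [w]) = Suc (Suc k)" "set (vs @ [w]) \<subseteq> V" using len vsV wV by auto
  ultimately show ?case using parent_order_snoc[OF i(1) uw(3)] by blast
qed

lemma tree_parent_order:
  assumes tree: "is_tree V E"
  obtains vs par where "parent_order vs par" "set vs = V" "E = parent_edges vs par"
proof -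
  have fin: "finite V" and sg: "simple_graph V E" and "V \<noteq> {}"
    using tree unfolding is_tree_def simple_graph_def by auto
  then obtain k where "card V = Suc k" by (metis card_gt_0_iff gr0_conv_Suc)
  with tree_parent_order_prefix[OF tree, of k] obtain vs par where po: "parent_order vs par"
    and len: "length vs = card V" and vsV: "set vs \<subseteq> V"
    and induced: "{e\<in>E. e \<subseteq> set vs} = parent_edges vs par" by auto
  have "set vs = V"
    using card_subset_eq[OF fin vsV] len distinct_card parent_order.distinct_vs[OF po] by metis
  moreover have "{e\<in>E. e \<subseteq> V} = E" using simple_graph_edge_subset[OF sg] by blast
  ultimately show ?thesis using that po induced by simp
qed

section \<open>Sublevel components when edge values increase away from the root\<close>

lemma creach_sym: "creach K x y \<Longrightarrow> creach K y x"
proof -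
  have "symp (\<lambda>x y. x \<noteq> y \<and> {x, y} \<in> K)" unfolding symp_def by (auto simp: insert_commute)
  then show "creach K x y \<Longrightarrow> creach K y x" unfolding creach_def by (rule sympD[OF symp_rtranclp])
qed

lemma creach_trans: "creach K x y \<Longrightarrow> creach K y z \<Longrightarrow> creach K x z"
  unfolding creach_def by (rule rtranclp_trans)

lemma ccomp_eq: "creach K x y \<Longrightarrow> ccomp K x = ccomp K y"
  unfolding ccomp_def by (blast intro: creach_trans creach_sym)

lemma creach_closed:
  assumes "creach K x y" "x \<in> A" "\<And>u v. u \<in> A \<Longrightarrow> u \<noteq> v \<Longrightarrow> {u, v} \<in> K \<Longrightarrow> v \<in> A"
  shows "y \<in> A"
  using assms(1)[unfolded creach_def] assms(2)
  by (induction rule: rtranclp_induct) (use assms(3) in blast)+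

lemma ccomp_subset:
  assumes "x \<in> A" "\<And>u v. u \<in> A \<Longrightarrow> u \<noteq> v \<Longrightarrow> {u, v} \<in> K \<Longrightarrow> v \<in> A"
  shows "ccomp K x \<subseteq> A"
  using creach_closed[of K x _ A] assms unfolding ccomp_def by blast

context parent_order
begin

abbreviation "edge \<equiv> parent_edge vs par"
abbreviation "S \<equiv> simplices (set vs) (parent_edges vs par)"

lemma vertex_eq_iff: "i < length vs \<Longrightarrow> j < length vs \<Longrightarrow> vs ! i = vs ! j \<longleftrightarrow> i = j"
  using distinct_vs by (simp add: nth_eq_iff_index_eq)

lemma parent_vertex_ne: "0 < i \<Longrightarrow> i < length vs \<Longrightarrow> vs ! par i \<noteq> vs ! i"
  using par_less[of i] vertex_eq_iff[of "par i" i] by simp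

lemma card_edge: "0 < i \<Longrightarrow> i < length vs \<Longrightarrow> card (edge i) = 2"
  using parent_vertex_ne by (simp add: parent_edge_def)

lemma vertex_ne_edge:
  assumes "0 < i" "i < length vs" shows "{v} \<noteq> edge i"
proof
  assume "{v} = edge i"
  then have "card (edge i) = 1" by (metis is_singletonI is_singleton_altdef)
  then show False using card_edge[OF assms] by simp
qed

lemma in_edge_iff: "v \<in> edge i \<longleftrightarrow> v = vs ! par i \<or> v = vs ! i"
  by (auto simp: parent_edge_def)

lemma simplices_parent_order:
  "S = (\<lambda>i. {vs ! i}) ` {..<length vs} \<union> edge ` {0<..<length vs}"
proof -
  have "(\<lambda>v. {v}) ` set vs = (\<lambda>i. {vs ! i}) ` {..<length vs}" by (auto simp: set_conv_nth)
  then show ?thesis unfolding simplices_def parent_edges_def by simp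
qed

lemma simplex_cases:
  assumes "\<sigma> \<in> S"
  obtains i where "i < length vs" "\<sigma> = {vs ! i}" | i where "0 < i" "i < length vs" "\<sigma> = edge i"
  using assms unfolding simplices_parent_order by auto

lemma edge_inj: "inj_on edge {0<..<length vs}"
proof (rule inj_onI)
  fix i j assume ij: "i \<in> {0<..<length vs}" "j \<in> {0<..<length vs}" "edge i = edge j"
  have "(vs ! i = vs ! par j \<or> vs ! i = vs ! j) \<and> (vs ! j = vs ! par i \<or> vs ! j = vs ! i)"
    using ij(3) in_edge_iff by blast
  then have "(i = par j \<or> i = j) \<and> (j = par i \<or> j = i)"
    using ij par_less[of i] par_less[of j] vertex_eq_iff by auto
  then show "i = j" using ij par_less[of i] par_less[of j] by auto
qed

lemma card_simplices: "card S = 2 * length vs - 1"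
proof -
  have "inj_on (\<lambda>i. {vs ! i}) {..<length vs}" by (rule inj_onI) (simp add: vertex_eq_iff)
  then have "card ((\<lambda>i. {vs ! i}) ` {..<length vs}) = length vs" by (simp add: card_image)
  moreover have "card (edge ` {0<..<length vs}) = length vs - 1"
    using card_image[OF edge_inj] by simp
  moreover have "(\<lambda>i. {vs ! i}) ` {..<length vs} \<inter> edge ` {0<..<length vs} = {}"
    using vertex_ne_edge by fastforce
  ultimately show ?thesis
    unfolding simplices_parent_order using vs_nonempty by (simp add: card_Un_disjoint)
qed

lemma edge_in_level: "0 < i \<Longrightarrow> i < length vs \<Longrightarrow> edge i \<in> level S F t \<longleftrightarrow> F (edge i) \<le> t"
  unfolding level_def simplices_parent_order by auto

lemma cverts_level: "cverts (level S F t) = {vs ! i | i. i < length vs \<and> F {vs ! i} \<le> t}"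
  unfolding cverts_def level_def simplices_parent_order using vertex_ne_edge by fastforce

lemma level_edge_cases:
  assumes "u \<noteq> v" "{u, v} \<in> level S F t"
  obtains j where "0 < j" "j < length vs" "{u, v} = edge j" "F (edge j) \<le> t"
proof -
  have "{u, v} \<in> S" "F {u, v} \<le> t" using assms(2) unfolding level_def by auto
  from \<open>{u, v} \<in> S\<close> show ?thesis
  proof (cases rule: simplex_cases)
    case (1 i)
    then show ?thesis using assms(1) by (simp add: doubleton_eq_iff)
  next
    case (2 i)
    then show ?thesis using that \<open>F {u, v} \<le> t\<close> by simp
  qed
qed

context
  fixes F :: "'a set \<Rightarrow> real"
  assumes edge_mono:
    "\<And>i. 0 < i \<Longrightarrow> i < length vs \<Longrightarrow> 0 < par i \<Longrightarrow> F (edge (par i)) < F (edge i)"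
begin

definition root_component :: "real \<Rightarrow> 'a set" where
  "root_component t = {vs ! i | i. i < length vs \<and> (i = 0 \<or> F (edge i) \<le> t)}"

lemma creach_root:
  assumes "i < length vs" "i = 0 \<or> F (edge i) \<le> t"
  shows "creach (level S F t) (vs ! 0) (vs ! i)"
  unfolding creach_def
proof (rule rtranclp_along_parents[where I = "{i. i < length vs \<and> (i = 0 \<or> F (edge i) \<le> t)}"
      and x = "(!) vs"])
  fix j assume j: "j \<in> {i. i < length vs \<and> (i = 0 \<or> F (edge i) \<le> t)}" "0 < j"
  then have "F (edge j) \<le> t" by simp
  moreover have "par j = 0 \<or> F (edge (par j)) \<le> t"
    using edge_mono[of j] j \<open>F (edge j) \<le> t\<close> by force
  ultimately show "par j < j \<and> par j \<in> {i. i < length vs \<and> (i = 0 \<or> F (edge i) \<le> t)} \<and>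
      vs ! par j \<noteq> vs ! j \<and> {vs ! par j, vs ! j} \<in> level S F t"
    using j par_less[of j] parent_vertex_ne[of j] edge_in_level[of j F t]
    by (auto simp: parent_edge_def)
qed (use assms in simp)

lemma ccomp_root:
  assumes "i < length vs" "i = 0 \<or> F (edge i) \<le> t"
  shows "ccomp (level S F t) (vs ! i) = root_component t"
proof -
  have "ccomp (level S F t) (vs ! i) = ccomp (level S F t) (vs ! 0)"
    using ccomp_eq[OF creach_root[OF assms]] by simp
  also have "\<dots> = root_component t"
  proof
    show "ccomp (level S F t) (vs ! 0) \<subseteq> root_component t"
    proof (rule ccomp_subset)
      show "vs ! 0 \<in> root_component t" unfolding root_component_def using vs_nonempty by auto
    next
      fix u v assume "u \<in> root_component t" "u \<noteq> v" "{u, v} \<in> level S F t"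
      then obtain j where j: "0 < j" "j < length vs" "{u, v} = edge j" "F (edge j) \<le> t"
        by (auto elim: level_edge_cases)
      then have "v = vs ! par j \<or> v = vs ! j" using in_edge_iff by blast
      moreover have "par j = 0 \<or> F (edge (par j)) \<le> t"
        using edge_mono[of j] j by force
      ultimately show "v \<in> root_component t"
        unfolding root_component_def using j par_less[of j] by force
    qed
    show "root_component t \<subseteq> ccomp (level S F t) (vs ! 0)"
      unfolding root_component_def ccomp_def using creach_root by blast
  qed
  finally show ?thesis .
qed

lemma ccomp_singleton:
  assumes "0 < i" "i < length vs" "t < F (edge i)"
  shows "ccomp (level S F t) (vs ! i) = {vs ! i}"
proof
  show "ccomp (level S F t) (vs ! i) \<subseteq> {vs ! i}"
  proof (rule ccomp_subset)
    fix u v assume "u \<in> {vs ! i}" "u \<noteq> v" "{u, v} \<in> level S F t"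
    then obtain j where j: "0 < j" "j < length vs" "vs ! i \<in> edge j" "F (edge j) \<le> t"
      by (auto elim: level_edge_cases)
    then have "i = par j \<or> i = j"
      using in_edge_iff par_less[of j] vertex_eq_iff assms(2) by auto
    then show "v \<in> {vs ! i}" using edge_mono[of j] j assms by auto
  qed simp
  show "{vs ! i} \<subseteq> ccomp (level S F t) (vs ! i)" unfolding ccomp_def creach_def by simp
qed

lemma rank_H0_level:
  assumes "F {vs ! 0} \<le> s" "s \<le> t"
  shows "rank_H0 (level S F s) (level S F t) =
    Suc (card {i. 0 < i \<and> i < length vs \<and> F {vs ! i} \<le> s \<and> t < F (edge i)})"
proof -
  define I where "I = {i. 0 < i \<and> i < length vs \<and> F {vs ! i} \<le> s \<and> t < F (edge i)}"
  have comps: "ccomp (level S F t) ` cverts (level S F s) = insert (root_component t) ((\<lambda>i. {vs ! i}) ` I)"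
  proof (intro equalityI subsetI)
    fix X assume "X \<in> ccomp (level S F t) ` cverts (level S F s)"
    then obtain i where i: "i < length vs" "F {vs ! i} \<le> s" "X = ccomp (level S F t) (vs ! i)"
      unfolding cverts_level by auto
    show "X \<in> insert (root_component t) ((\<lambda>i. {vs ! i}) ` I)"
    proof (cases "i = 0 \<or> F (edge i) \<le> t")
      case True then show ?thesis using ccomp_root i by simp
    next
      case False
      then have "i \<in> I" unfolding I_def using i by auto
      then show ?thesis using ccomp_singleton i False by auto
    qed
  next
    fix X assume "X \<in> insert (root_component t) ((\<lambda>i. {vs ! i}) ` I)"
    moreover have "root_component t \<in> ccomp (level S F t) ` cverts (level S F s)"
      using ccomp_root[of 0 t] assms(1) vs_nonempty unfolding cverts_level by force
    moreover have "{vs ! i} \<in> ccomp (level S F t) ` cverts (level S F s)" if "i \<in> I" for i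
      using that ccomp_singleton[of i t] unfolding I_def cverts_level by force
    ultimately show "X \<in> ccomp (level S F t) ` cverts (level S F s)" by blast
  qed
  have "vs ! 0 \<in> root_component t" unfolding root_component_def using vs_nonempty by auto
  then have "root_component t \<notin> (\<lambda>i. {vs ! i}) ` I"
    using vertex_eq_iff[of 0] unfolding I_def by force
  moreover have "inj_on (\<lambda>i. {vs ! i}) I" by (rule inj_onI) (auto simp: I_def vertex_eq_iff)
  moreover have "finite I" unfolding I_def by (rule finite_subset[of _ "{..<length vs}"]) auto
  ultimately show ?thesis
    unfolding rank_H0_def comps I_def[symmetric] by (simp add: card_image)
qed

end

end

section \<open>Persistence diagrams from persistent Betti numbers\<close>

lemma strict_sorted_nth_less_iff:
  fixes cs :: "'a::linorder list"
  assumes "sorted_wrt (<) cs" "i < length cs" "j < length cs"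
  shows "cs ! i < cs ! j \<longleftrightarrow> i < j"
  using assms by (metis sorted_wrt_nth_less linorder_neqE_nat order.asym)

lemma strict_sorted_nth_le_iff:
  fixes cs :: "'a::linorder list"
  assumes "sorted_wrt (<) cs" "i < length cs" "j < length cs"
  shows "cs ! i \<le> cs ! j \<longleftrightarrow> i \<le> j"
  using strict_sorted_nth_less_iff[OF assms(1,3,2)] by (metis not_less)

lemma strict_sorted_nth_eq_iff:
  fixes cs :: "'a::linorder list"
  assumes "sorted_wrt (<) cs" "i < length cs" "j < length cs"
  shows "cs ! i = cs ! j \<longleftrightarrow> i = j"
  using assms by (simp add: strict_sorted_iff nth_eq_iff_index_eq)

lemma of_bool_le_step:
  fixes cs :: "'a::linorder list"
  assumes "sorted_wrt (<) cs" "x \<in> set cs" "0 < i" "i < length cs"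
  shows "(of_bool (x \<le> cs ! i) :: int) - of_bool (x \<le> cs ! (i - 1)) = of_bool (x = cs ! i)"
proof -
  obtain l where "l < length cs" "x = cs ! l" using assms(2) by (auto simp: in_set_conv_nth)
  then show ?thesis
    using assms strict_sorted_nth_le_iff[OF assms(1)] strict_sorted_nth_eq_iff[OF assms(1)]
    by (cases "l = i") auto
qed

lemma of_bool_less_step:
  fixes cs :: "'a::linorder list"
  assumes "sorted_wrt (<) cs" "y \<in> set cs" "0 < j" "j < length cs"
  shows "(of_bool (cs ! (j - 1) < y) :: int) - of_bool (cs ! j < y) = of_bool (y = cs ! j)"
proof -
  obtain l where "l < length cs" "y = cs ! l" using assms(2) by (auto simp: in_set_conv_nth)
  then show ?thesis
    using assms strict_sorted_nth_less_iff[OF assms(1)] strict_sorted_nth_eq_iff[OF assms(1)]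
    by (cases "l = j") auto
qed

lemma replicate_mset_card: "finite A \<Longrightarrow> replicate_mset (card A) y = (\<Sum>x\<in>A. {#y#})"
  by (induction A rule: finite_induct) auto

lemma replicate_mset_count:
  assumes "finite U"
  shows "replicate_mset (nat (\<Sum>u\<in>U. of_bool (P u) :: int)) y = (\<Sum>u\<in>U. if P u then {#y#} else {#})"
proof -
  have "nat (\<Sum>u\<in>U. of_bool (P u) :: int) = card (U \<inter> {u. P u})" using assms by simp
  moreover have "(\<Sum>u\<in>U. if P u then {#y#} else {#}) = (\<Sum>u\<in>U \<inter> {u. P u}. {#y#})"
    using assms by (simp add: sum.inter_filter Int_def)
  ultimately show ?thesis using replicate_mset_card[of "U \<inter> {u. P u}" y] assms by simp
qed

text \<open>The hypothesis \<open>pbetti_count\<close> describes one essential class born at \<open>cs ! 0\<close>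
  and, for each \<open>u \<in> U\<close>, a class born at \<open>b u\<close> that dies at \<open>d u\<close>.\<close>

context
  fixes Ks :: "'a set set list" and cs :: "real list" and U :: "'u set" and b d :: "'u \<Rightarrow> real"
  assumes sorted_cs: "sorted_wrt (<) cs" and cs_nonempty: "cs \<noteq> []"
    and length_Ks: "length Ks = length cs" and finite_U: "finite U"
    and birth_in: "\<And>u. u \<in> U \<Longrightarrow> b u \<in> set cs" and death_in: "\<And>u. u \<in> U \<Longrightarrow> d u \<in> set cs"
    and first_less_birth: "\<And>u. u \<in> U \<Longrightarrow> cs ! 0 < b u"
    and birth_less_death: "\<And>u. u \<in> U \<Longrightarrow> b u < d u"
    and pbetti_count: "\<And>i j. i \<le> j \<Longrightarrow> j < length cs \<Longrightarrow>
       pbetti Ks i j = 1 + (\<Sum>u\<in>U. of_bool (b u \<le> cs ! i \<and> cs ! j < d u))"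
begin

lemma pbetti_inclusion_exclusion:
  assumes "i < j" "j < length cs"
  shows "pbetti Ks i (j - 1) - pbetti Ks i j - pbetti_before Ks i (j - 1) + pbetti_before Ks i j
    = (\<Sum>u\<in>U. of_bool (b u = cs ! i \<and> d u = cs ! j))"
proof (cases "i = 0")
  case True
  then have "cs ! i < b u" if "u \<in> U" for u using first_less_birth[OF that] by simp
  then have "(\<Sum>u\<in>U. of_bool (b u \<le> cs ! i \<and> cs ! j' < d u) :: int) = 0"
    and "(\<Sum>u\<in>U. of_bool (b u = cs ! i \<and> d u = cs ! j) :: int) = 0" for j'
    by (auto intro!: sum.neutral dest!: first_less_birth simp: True)
  then show ?thesis
    using True assms pbetti_count[of i "j - 1"] pbetti_count[of i j] unfolding pbetti_before_def
    by simp
next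
  case False
  let ?A = "\<lambda>i u. of_bool (b u \<le> cs ! i) :: int"
  let ?B = "\<lambda>j u. of_bool (cs ! j < d u) :: int"
  have prod: "pbetti Ks i' j' = 1 + (\<Sum>u\<in>U. ?A i' u * ?B j' u)"
    if "i' \<le> j'" "j' < length cs" for i' j'
    using pbetti_count[OF that] by (simp add: of_bool_conj)
  have "pbetti Ks i (j - 1) - pbetti Ks i j - pbetti_before Ks i (j - 1) + pbetti_before Ks i j
      = (\<Sum>u\<in>U. ?A i u * ?B (j - 1) u - ?A i u * ?B j u
                   - ?A (i - 1) u * ?B (j - 1) u + ?A (i - 1) u * ?B j u)"
    using False assms prod[of i "j - 1"] prod[of i j] prod[of "i - 1" "j - 1"] prod[of "i - 1" j]
    unfolding pbetti_before_def by (simp add: sum.distrib sum_subtractf)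
  also have "\<dots> = (\<Sum>u\<in>U. (?A i u - ?A (i - 1) u) * (?B (j - 1) u - ?B j u))"
    by (intro sum.cong) (simp_all add: algebra_simps)
  also have "\<dots> = (\<Sum>u\<in>U. of_bool (b u = cs ! i \<and> d u = cs ! j))"
  proof (rule sum.cong)
    fix u assume u: "u \<in> U"
    have "?A i u - ?A (i - 1) u = of_bool (b u = cs ! i)"
      using of_bool_le_step[OF sorted_cs birth_in[OF u], of i] False assms by simp
    moreover have "?B (j - 1) u - ?B j u = of_bool (d u = cs ! j)"
      using of_bool_less_step[OF sorted_cs death_in[OF u], of j] assms by simp
    ultimately show "(?A i u - ?A (i - 1) u) * (?B (j - 1) u - ?B j u) =
        of_bool (b u = cs ! i \<and> d u = cs ! j)" by simp
  qed simp
  finally show ?thesis .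
qed

lemma pbetti_essential:
  assumes "i < length cs"
  shows "pbetti Ks i (length cs - 1) - pbetti_before Ks i (length cs - 1) = of_bool (i = 0)"
proof -
  have "\<not> cs ! (length cs - 1) < d u" if u: "u \<in> U" for u
  proof -
    obtain l where "l < length cs" "d u = cs ! l" using death_in[OF u] by (auto simp: in_set_conv_nth)
    then show ?thesis using strict_sorted_nth_le_iff[OF sorted_cs, of l "length cs - 1"] by (simp add: not_less)
  qed
  then have "pbetti Ks i' (length cs - 1) = 1" if "i' \<le> i" for i'
    using pbetti_count[of i' "length cs - 1"] that assms by (simp add: sum.neutral)
  then show ?thesis unfolding pbetti_before_def by simp
qed

lemma point_indicator_sum:
  assumes "u \<in> U"
  shows "(\<Sum>i<length cs. \<Sum>j\<in>{i<..<length cs}.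
      if b u = cs ! i \<and> d u = cs ! j then {#(b u, ereal (d u))#} else {#}) = {#(b u, ereal (d u))#}"
proof -
  let ?M = "length cs"
  obtain iu ju where iu: "iu < ?M" "b u = cs ! iu" and ju: "ju < ?M" "d u = cs ! ju"
    using birth_in[OF assms] death_in[OF assms] by (auto simp: in_set_conv_nth)
  have "iu < ju" using birth_less_death[OF assms] iu ju strict_sorted_nth_less_iff[OF sorted_cs] by simp
  have "(b u = cs ! i \<and> d u = cs ! j) \<longleftrightarrow> i = iu \<and> j = ju" if "i < ?M" "j < ?M" for i j
    using that iu ju strict_sorted_nth_eq_iff[OF sorted_cs] by metis
  then have "(\<Sum>i<?M. \<Sum>j\<in>{i<..<?M}.
      if b u = cs ! i \<and> d u = cs ! j then {#(b u, ereal (d u))#} else {#})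
    = (\<Sum>i<?M. if i = iu then \<Sum>j\<in>{i<..<?M}. if j = ju then {#(b u, ereal (d u))#} else {#} else {#})"
    by (intro sum.cong refl) auto
  also have "\<dots> = {#(b u, ereal (d u))#}" using iu ju \<open>iu < ju\<close> by simp
  finally show ?thesis .
qed

lemma finite_points_sum:
  "(\<Sum>i<length cs. \<Sum>j\<in>{i<..<length cs}.
      replicate_mset (nat (\<Sum>u\<in>U. of_bool (b u = cs ! i \<and> d u = cs ! j))) (cs ! i, ereal (cs ! j)))
   = (\<Sum>u\<in>U. {#(b u, ereal (d u))#})"
proof -
  let ?M = "length cs"
  have "(\<Sum>i<?M. \<Sum>j\<in>{i<..<?M}.
      replicate_mset (nat (\<Sum>u\<in>U. of_bool (b u = cs ! i \<and> d u = cs ! j))) (cs ! i, ereal (cs ! j)))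
    = (\<Sum>i<?M. \<Sum>j\<in>{i<..<?M}. \<Sum>u\<in>U.
        if b u = cs ! i \<and> d u = cs ! j then {#(b u, ereal (d u))#} else {#})"
    by (intro sum.cong refl) (auto simp: replicate_mset_count[OF finite_U] intro: sum.cong)
  also have "\<dots> = (\<Sum>i<?M. \<Sum>u\<in>U. \<Sum>j\<in>{i<..<?M}.
        if b u = cs ! i \<and> d u = cs ! j then {#(b u, ereal (d u))#} else {#})"
    by (intro sum.cong refl sum.swap)
  also have "\<dots> = (\<Sum>u\<in>U. \<Sum>i<?M. \<Sum>j\<in>{i<..<?M}.
        if b u = cs ! i \<and> d u = cs ! j then {#(b u, ereal (d u))#} else {#})"
    by (rule sum.swap)
  also have "\<dots> = (\<Sum>u\<in>U. {#(b u, ereal (d u))#})"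
    by (intro sum.cong refl point_indicator_sum)
  finally show ?thesis .
qed

theorem pers_diagram_from_pbetti:
  "pers_diagram Ks cs = (\<Sum>u\<in>U. {#(b u, ereal (d u))#}) + {#(cs ! 0, PInfty)#}"
proof -
  let ?M = "length cs"
  have "(\<Sum>i<?M. \<Sum>j\<in>{i<..<?M}.
          replicate_mset (nat (pbetti Ks i (j - 1) - pbetti Ks i j
                               - pbetti_before Ks i (j - 1) + pbetti_before Ks i j))
            (cs ! i, ereal (cs ! j))) = (\<Sum>u\<in>U. {#(b u, ereal (d u))#})"
    unfolding finite_points_sum[symmetric]
  proof (intro sum.cong refl)
    fix i j assume "i \<in> {..<?M}" "j \<in> {i<..<?M}"
    then show "replicate_mset (nat (pbetti Ks i (j - 1) - pbetti Ks i j
                               - pbetti_before Ks i (j - 1) + pbetti_before Ks i j))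
            (cs ! i, ereal (cs ! j)) =
        replicate_mset (nat (\<Sum>u\<in>U. of_bool (b u = cs ! i \<and> d u = cs ! j))) (cs ! i, ereal (cs ! j))"
      using pbetti_inclusion_exclusion[of i j] by simp
  qed
  moreover have "(\<Sum>i<?M. replicate_mset (nat (pbetti Ks i (?M - 1) - pbetti_before Ks i (?M - 1)))
            (cs ! i, PInfty)) = (\<Sum>i<?M. if i = 0 then {#(cs ! 0, PInfty)#} else {#})"
  proof (intro sum.cong refl)
    fix i assume "i \<in> {..<?M}"
    then show "replicate_mset (nat (pbetti Ks i (?M - 1) - pbetti_before Ks i (?M - 1))) (cs ! i, PInfty)
        = (if i = 0 then {#(cs ! 0, PInfty)#} else {#})"
      using pbetti_essential[of i] by simp
  qed
  moreover have "(\<Sum>i<?M. if i = 0 then {#(cs ! 0, PInfty)#} else {#}) = {#(cs ! 0, PInfty)#}"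
    using cs_nonempty by simp
  ultimately show ?thesis unfolding pers_diagram_def Let_def length_Ks by simp
qed

end

section \<open>Realising a consistent diagram\<close>

locale diagram_realisation = parent_order +
  fixes D :: "(real \<times> ereal) set"
  assumes consistent: "consistent_diagram D (card S)"
begin

definition pairs :: "(real \<times> ereal) set" where
  "pairs = D - {(0, PInfty)}"

definition death :: "real \<times> ereal \<Rightarrow> real" where
  "death p = real_of_ereal (snd p)"

lemma finite_pairs: "finite pairs"
  using consistent unfolding consistent_diagram_def pairs_def by simp

lemma pairs_bounds:
  "\<forall>p\<in>pairs. fst p \<in> \<int> \<and> (\<exists>d\<in>\<int>. snd p = ereal d) \<and>
        1 \<le> fst p \<and> fst p \<le> real (card S) \<and> 1 \<le> snd p \<and> snd p \<le> ereal (real (card S)) \<and>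
        ereal (fst p) < snd p"
  using consistent unfolding consistent_diagram_def pairs_def by (elim conjE) assumption

lemma pairs_separated:
  "\<forall>p\<in>pairs. \<forall>q\<in>pairs. ereal (fst p) \<noteq> snd q \<and> (p \<noteq> q \<longrightarrow> fst p \<noteq> fst q \<and> snd p \<noteq> snd q)"
  using consistent unfolding consistent_diagram_def pairs_def by (elim conjE) assumption

lemma pair_props:
  assumes "p \<in> pairs"
  shows "fst p \<in> \<int>" "1 \<le> fst p" "snd p = ereal (death p)" "death p \<in> \<int>"
    "fst p < death p" "death p \<le> card S"
proof -
  obtain x where x: "x \<in> \<int>" "snd p = ereal x" using bspec[OF pairs_bounds assms] by blast
  then have "death p = x" by (simp add: death_def)
  with x bspec[OF pairs_bounds assms]
  show "fst p \<in> \<int>" "1 \<le> fst p" "snd p = ereal (death p)" "death p \<in> \<int>"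
    "fst p < death p" "death p \<le> card S" by auto
qed

lemma pairs_distinct:
  assumes "p \<in> pairs" "q \<in> pairs"
  shows "fst p \<noteq> death q" and "p \<noteq> q \<Longrightarrow> fst p \<noteq> fst q" and "p \<noteq> q \<Longrightarrow> death p \<noteq> death q"
proof -
  have "ereal (fst p) \<noteq> snd q \<and> (p \<noteq> q \<longrightarrow> fst p \<noteq> fst q \<and> snd p \<noteq> snd q)"
    using pairs_separated assms by blast
  then show "fst p \<noteq> death q" "p \<noteq> q \<Longrightarrow> fst p \<noteq> fst q" "p \<noteq> q \<Longrightarrow> death p \<noteq> death q"
    using pair_props(3)[OF assms(1)] pair_props(3)[OF assms(2)] by auto
qed

lemma inj_on_death: "inj_on death pairs"
  using pairs_distinct(3) by (meson inj_onI)

lemma card_pairs_le: "card pairs \<le> length vs - 1"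
proof -
  have "fst ` pairs \<union> death ` pairs \<subseteq> real ` {1..card S}"
  proof
    fix x assume "x \<in> fst ` pairs \<union> death ` pairs"
    then obtain p where p: "p \<in> pairs" "x = fst p \<or> x = death p" by auto
    then have "x \<in> \<int>" "1 \<le> x" "x \<le> card S" using pair_props[OF p(1)] by auto
    then have "x \<in> \<nat>" by (simp add: Nats_altdef2)
    then obtain n where "x = real n" by (auto elim: Nats_cases)
    with \<open>1 \<le> x\<close> \<open>x \<le> card S\<close> show "x \<in> real ` {1..card S}" by auto
  qed
  then have "card (fst ` pairs \<union> death ` pairs) \<le> card (real ` {1..card S})"
    by (intro card_mono) auto
  also have "\<dots> = card S" by (simp add: card_image)
  finally have "card (fst ` pairs \<union> death ` pairs) \<le> card S" .
  moreover have "fst ` pairs \<inter> death ` pairs = {}" using pairs_distinct(1) by fastforce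
  moreover have "card (fst ` pairs) = card pairs"
    using pairs_distinct(2) by (intro card_image) (meson inj_onI)
  moreover have "card (death ` pairs) = card pairs" using card_image[OF inj_on_death] .
  ultimately have "2 * card pairs \<le> card S" using finite_pairs by (simp add: card_Un_disjoint)
  then show ?thesis using card_simplices by simp
qed

text \<open>By \<open>card_pairs_le\<close>, the subtraction below does not truncate.\<close>

definition m :: nat where
  "m = length vs - 1 - card pairs"

definition pair_indices :: "nat set" where
  "pair_indices = {m<..<length vs}"

definition deaths :: "real list" where
  "deaths = sorted_list_of_set (death ` pairs)"

definition pair_of :: "nat \<Rightarrow> real \<times> ereal" where
  "pair_of i = the_inv_into pairs death (deaths ! (i - Suc m))"

lemma length_vs_eq: "length vs = Suc (m + card pairs)"
  using card_pairs_le vs_nonempty unfolding m_def by (cases vs) auto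

lemma length_deaths: "length deaths = card pairs"
  unfolding deaths_def using card_image[OF inj_on_death] by simp

lemma bij_pair_of: "bij_betw pair_of pair_indices pairs"
proof -
  have shift: "bij_betw (\<lambda>i. i - Suc m) pair_indices {..<card pairs}"
    by (rule bij_betw_byWitness[where f' = "\<lambda>t. t + Suc m"])
      (auto simp: pair_indices_def length_vs_eq)
  have nth: "bij_betw ((!) deaths) {..<card pairs} (death ` pairs)"
    by (rule bij_betw_nth) (simp_all add: deaths_def length_deaths[symmetric] finite_pairs)
  have inv: "bij_betw (the_inv_into pairs death) (death ` pairs) pairs"
    by (rule bij_betw_the_inv_into[OF inj_on_imp_bij_betw[OF inj_on_death]])
  show ?thesis
    using bij_betw_trans[OF bij_betw_trans[OF shift nth] inv] unfolding pair_of_def comp_def .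
qed

lemma death_pair_of:
  assumes "i \<in> pair_indices" shows "death (pair_of i) = deaths ! (i - Suc m)"
proof -
  have "deaths ! (i - Suc m) \<in> death ` pairs"
    using assms nth_mem[of "i - Suc m" deaths] finite_pairs
    unfolding pair_indices_def length_deaths deaths_def[symmetric]
    by (auto simp: length_vs_eq deaths_def)
  then show ?thesis unfolding pair_of_def by (rule f_the_inv_into_f[OF inj_on_death])
qed

definition vertex_value :: "nat \<Rightarrow> real" where
  "vertex_value i = (if i \<le> m then real i / real (length vs) else fst (pair_of i))"

definition edge_value :: "nat \<Rightarrow> real" where
  "edge_value i = (if i \<le> m then real i / real (length vs) else death (pair_of i))"

lemma pair_of_eq: "i \<in> pair_indices \<Longrightarrow> pair_of i = (vertex_value i, ereal (edge_value i))"
  using pair_props(3)[OF bij_betw_apply[OF bij_pair_of]]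
  by (auto simp: vertex_value_def edge_value_def pair_indices_def prod_eq_iff)

lemma low_values:
  assumes "i \<le> m"
  shows "vertex_value i = edge_value i" "edge_value i = real i / real (length vs)"
    "0 \<le> edge_value i" "edge_value i < 1"
  using assms length_vs_eq by (simp_all add: vertex_value_def edge_value_def)

lemma high_values:
  assumes "i \<in> pair_indices"
  shows "vertex_value i \<in> \<nat>" "edge_value i \<in> \<nat>" "1 \<le> vertex_value i"
    "vertex_value i < edge_value i" "edge_value i \<le> card S"
proof -
  have "pair_of i \<in> pairs" by (rule bij_betw_apply[OF bij_pair_of assms])
  moreover have "vertex_value i = fst (pair_of i)" "edge_value i = death (pair_of i)"
    using assms by (simp_all add: vertex_value_def edge_value_def pair_indices_def)
  ultimately show "vertex_value i \<in> \<nat>" "edge_value i \<in> \<nat>" "1 \<le> vertex_value i"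
    "vertex_value i < edge_value i" "edge_value i \<le> card S"
    using pair_props[of "pair_of i"] by (auto simp: Nats_altdef2)
qed

lemma edge_value_less_high:
  assumes "i \<in> pair_indices" "j \<in> pair_indices" "i < j"
  shows "edge_value i < edge_value j"
proof -
  have "sorted_wrt (<) deaths" unfolding deaths_def by simp
  moreover have "i - Suc m < j - Suc m" "j - Suc m < length deaths"
    using assms length_deaths length_vs_eq unfolding pair_indices_def by auto
  ultimately have "deaths ! (i - Suc m) < deaths ! (j - Suc m)" by (rule sorted_wrt_nth_less)
  then show ?thesis
    using assms death_pair_of unfolding edge_value_def pair_indices_def by simp
qed

lemma edge_value_parent_less:
  assumes "0 < i" "i < length vs" "0 < par i"
  shows "edge_value (par i) < edge_value i"
proof -
  have "par i < i" using par_less assms by simp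
  consider "i \<le> m" | "par i \<le> m" "m < i" | "m < par i"
    by linarith
  then show ?thesis
  proof cases
    case 1
    then show ?thesis using \<open>par i < i\<close> low_values(2) vs_nonempty by (simp add: divide_strict_right_mono)
  next
    case 2
    then have "i \<in> pair_indices" using assms unfolding pair_indices_def by simp
    then show ?thesis using 2 low_values high_values by fastforce
  next
    case 3
    then show ?thesis
      using edge_value_less_high[of "par i" i] \<open>par i < i\<close> assms unfolding pair_indices_def by simp
  qed
qed

lemma index_pair_cases:
  assumes "i < length vs" "j < length vs"
  obtains "i \<le> m" "j \<le> m" | "i \<le> m" "j \<in> pair_indices" | "i \<in> pair_indices" "j \<le> m"
    | "i \<in> pair_indices" "j \<in> pair_indices"
  using assms unfolding pair_indices_def by fastforce

lemma pair_of_inj: "i \<in> pair_indices \<Longrightarrow> j \<in> pair_indices \<Longrightarrow> pair_of i = pair_of j \<Longrightarrow> i = j"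
  using bij_betw_imp_inj_on[OF bij_pair_of] by (auto dest: inj_onD)

lemma vertex_value_inj:
  assumes "i < length vs" "j < length vs" "vertex_value i = vertex_value j"
  shows "i = j"
  using assms(1,2)
proof (cases rule: index_pair_cases)
  case 1
  then show ?thesis using assms(3) low_values(1,2) vs_nonempty by simp
next
  case 4
  then have "fst (pair_of i) = fst (pair_of j)"
    using assms(3) unfolding vertex_value_def pair_indices_def by simp
  then show ?thesis using pairs_distinct(2) bij_betw_apply[OF bij_pair_of] pair_of_inj 4 by metis
qed (use assms(3) low_values(1,4) high_values(3) in fastforce)+

lemma edge_value_inj:
  assumes "i < length vs" "j < length vs" "edge_value i = edge_value j"
  shows "i = j"
  using assms(1,2)
proof (cases rule: index_pair_cases)
  case 1
  then show ?thesis using assms(3) low_values(2) vs_nonempty by simp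
next
  case 4
  then have "death (pair_of i) = death (pair_of j)"
    using assms(3) unfolding edge_value_def pair_indices_def by simp
  then show ?thesis using pairs_distinct(3) bij_betw_apply[OF bij_pair_of] pair_of_inj 4 by metis
qed (use assms(3) low_values(4) high_values(3,4) in fastforce)+

lemma vertex_edge_value_eq:
  assumes "i < length vs" "j < length vs" "vertex_value i = edge_value j"
  shows "i = j \<and> i \<le> m"
  using assms(1,2)
proof (cases rule: index_pair_cases)
  case 1
  then show ?thesis using assms(3) low_values(1,2) vs_nonempty by simp
next
  case 4
  then have "fst (pair_of i) = death (pair_of j)"
    using assms(3) unfolding vertex_value_def edge_value_def pair_indices_def by simp
  then show ?thesis using pairs_distinct(1) bij_betw_apply[OF bij_pair_of] 4 by metis
qed (use assms(3) low_values(1,4) high_values(3,4) in fastforce)+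

definition index_of :: "'a \<Rightarrow> nat" where
  "index_of v = the_inv_into {..<length vs} ((!) vs) v"

definition morse_fun :: "'a set \<Rightarrow> real" where
  "morse_fun \<sigma> = (if card \<sigma> = 1 then vertex_value (index_of (the_elem \<sigma>))
                   else edge_value (Max (index_of ` \<sigma>)))"

lemma index_of_nth: "i < length vs \<Longrightarrow> index_of (vs ! i) = i"
  unfolding index_of_def using distinct_vs by (simp add: the_inv_into_f_f inj_on_nth)

lemma morse_fun_vertex: "i < length vs \<Longrightarrow> morse_fun {vs ! i} = vertex_value i"
  unfolding morse_fun_def by (simp add: index_of_nth)

lemma morse_fun_edge:
  assumes "0 < i" "i < length vs" shows "morse_fun (edge i) = edge_value i"
proof -
  have "index_of ` edge i = {par i, i}"
    using assms par_less[OF assms] by (simp add: parent_edge_def index_of_nth)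
  then show ?thesis unfolding morse_fun_def using card_edge[OF assms] par_less[OF assms] by simp
qed

lemma morse_fun_eq_cases:
  assumes "\<sigma> \<in> S" "\<tau> \<in> S" "\<sigma> \<noteq> \<tau>" "morse_fun \<sigma> = morse_fun \<tau>"
  obtains i where "0 < i" "i \<le> m" "{\<sigma>, \<tau>} = {{vs ! i}, edge i}"
  using assms(1)
proof (cases rule: simplex_cases)
  case (1 i)
  from assms(2) show ?thesis
  proof (cases rule: simplex_cases)
    case (1 j)
    then show ?thesis using \<open>\<sigma> = {vs ! i}\<close> \<open>i < length vs\<close> assms(3,4)
      by (auto simp: morse_fun_vertex dest: vertex_value_inj)
  next
    case (2 j)
    then show ?thesis using \<open>\<sigma> = {vs ! i}\<close> \<open>i < length vs\<close> assms(4) that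
      vertex_edge_value_eq[of i j] by (simp add: morse_fun_vertex morse_fun_edge)
  qed
next
  case (2 i)
  from assms(2) show ?thesis
  proof (cases rule: simplex_cases)
    case (1 j)
    then show ?thesis using \<open>\<sigma> = edge i\<close> \<open>0 < i\<close> \<open>i < length vs\<close> assms(4) that
      vertex_edge_value_eq[of j i] by (simp add: morse_fun_vertex morse_fun_edge insert_commute)
  next
    case (2 j)
    then show ?thesis using \<open>\<sigma> = edge i\<close> \<open>0 < i\<close> \<open>i < length vs\<close> assms(3,4)
      by (auto simp: morse_fun_edge dest: edge_value_inj)
  qed
qed

definition regular :: "'a set \<Rightarrow> bool" where
  "regular \<sigma> \<longleftrightarrow> (\<exists>i. 0 < i \<and> i \<le> m \<and> \<sigma> \<in> {{vs ! i}, edge i})"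

lemma m_less_length: "m < length vs"
  using length_vs_eq by simp

lemma regular_vertex_iff: "i < length vs \<Longrightarrow> regular {vs ! i} \<longleftrightarrow> 0 < i \<and> i \<le> m"
  unfolding regular_def using vertex_eq_iff vertex_ne_edge m_less_length by fastforce

lemma regular_edge_iff:
  assumes "0 < i" "i < length vs" shows "regular (edge i) \<longleftrightarrow> i \<le> m"
proof -
  have "edge i \<noteq> {vs ! j}" for j using vertex_ne_edge[OF assms] by metis
  then have "regular (edge i) \<longleftrightarrow> (\<exists>j. 0 < j \<and> j \<le> m \<and> edge i = edge j)"
    unfolding regular_def by auto
  also have "\<dots> \<longleftrightarrow> i \<le> m"
  proof
    assume "\<exists>j. 0 < j \<and> j \<le> m \<and> edge i = edge j"
    then obtain j where "0 < j" "j \<le> m" "edge i = edge j" by blast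
    then have "i = j" using inj_onD[OF edge_inj] assms m_less_length by simp
    with \<open>j \<le> m\<close> show "i \<le> m" by simp
  qed (use assms in blast)
  finally show ?thesis .
qed

lemma unique_value_iff_not_regular:
  assumes "\<sigma> \<in> S"
  shows "(\<forall>\<tau>\<in>S. morse_fun \<tau> = morse_fun \<sigma> \<longrightarrow> \<tau> = \<sigma>) \<longleftrightarrow> \<not> regular \<sigma>"
proof
  assume unique: "\<forall>\<tau>\<in>S. morse_fun \<tau> = morse_fun \<sigma> \<longrightarrow> \<tau> = \<sigma>"
  show "\<not> regular \<sigma>"
  proof
    assume "regular \<sigma>"
    then obtain i where i: "0 < i" "i \<le> m" "\<sigma> \<in> {{vs ! i}, edge i}" unfolding regular_def by blast
    then have "i < length vs" using m_less_length by simp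
    then have in_S: "{vs ! i} \<in> S" "edge i \<in> S" using i(1) by (simp_all add: simplices_parent_order)
    have same: "morse_fun {vs ! i} = morse_fun (edge i)"
      using i \<open>i < length vs\<close> low_values(1) by (simp add: morse_fun_vertex morse_fun_edge)
    have ne: "{vs ! i} \<noteq> edge i" using vertex_ne_edge[OF i(1) \<open>i < length vs\<close>] .
    from i(3) show False
    proof
      assume "\<sigma> = {vs ! i}"
      then show False using unique in_S(2) same ne by metis
    next
      assume "\<sigma> \<in> {edge i}"
      then show False using unique in_S(1) same ne by simp
    qed
  qed
next
  assume not_regular: "\<not> regular \<sigma>"
  show "\<forall>\<tau>\<in>S. morse_fun \<tau> = morse_fun \<sigma> \<longrightarrow> \<tau> = \<sigma>"
  proof (intro ballI impI, rule ccontr)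
    fix \<tau> assume \<tau>: "\<tau> \<in> S" "morse_fun \<tau> = morse_fun \<sigma>" "\<tau> \<noteq> \<sigma>"
    obtain i where i: "0 < i" "i \<le> m" "{\<sigma>, \<tau>} = {{vs ! i}, edge i}"
      using morse_fun_eq_cases[OF assms \<tau>(1) \<tau>(3)[symmetric] \<tau>(2)[symmetric]] .
    have "\<sigma> \<in> {{vs ! i}, edge i}" unfolding i(3)[symmetric] by simp
    then show False using not_regular i(1,2) unfolding regular_def by blast
  qed
qed

lemma value_bounds:
  assumes "i < length vs"
  shows "0 \<le> vertex_value i" "vertex_value i \<le> edge_value i" "edge_value i \<le> card S"
proof -
  have "0 \<le> vertex_value i \<and> vertex_value i \<le> edge_value i \<and> edge_value i \<le> card S"
  proof (cases "i \<le> m")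
    case True
    have "1 \<le> card S" using card_simplices vs_nonempty by (cases vs) auto
    then show ?thesis using low_values[OF True] by linarith
  next
    case False
    then have "i \<in> pair_indices" using assms unfolding pair_indices_def by simp
    then show ?thesis using high_values(3-5)[of i] by linarith
  qed
  then show "0 \<le> vertex_value i" "vertex_value i \<le> edge_value i" "edge_value i \<le> card S" by auto
qed

lemma vertex_value_0: "vertex_value 0 = 0"
  using low_values(1,2)[of 0] by simp

lemma morse_fun_range: "\<sigma> \<in> S \<Longrightarrow> 0 \<le> morse_fun \<sigma> \<and> morse_fun \<sigma> \<le> card S"
  by (cases rule: simplex_cases)
    (use value_bounds morse_fun_vertex morse_fun_edge in fastforce)+

lemma morse_fun_face_le:
  assumes "e \<in> parent_edges vs par" "v \<in> e"
  shows "morse_fun {v} \<le> morse_fun e"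
proof -
  obtain i where i: "0 < i" "i < length vs" "e = edge i" using assms(1) unfolding parent_edges_def by auto
  then have "par i < length vs" using par_less[of i] by simp
  have "vertex_value (par i) \<le> edge_value i"
  proof (cases "par i = 0")
    case True
    then show ?thesis using value_bounds[of i] vertex_value_0 i by simp
  next
    case False
    then show ?thesis using value_bounds(2)[of "par i"] edge_value_parent_less[of i] i \<open>par i < length vs\<close>
      by simp
  qed
  moreover have "v = vs ! par i \<or> v = vs ! i" using assms(2) i(3) in_edge_iff by blast
  ultimately show ?thesis
    using i \<open>par i < length vs\<close> value_bounds(2)[of i] by (auto simp: morse_fun_vertex morse_fun_edge)
qed

lemma morse_fun_eq_vertex_value:
  assumes "\<tau> \<in> S" "i < length vs" "morse_fun \<tau> = vertex_value i"
  shows "\<tau> \<in> {{vs ! i}, edge i}"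
  using assms(1)
proof (cases rule: simplex_cases)
  case (1 j)
  then have "j = i" using assms(2,3) vertex_value_inj morse_fun_vertex by metis
  then show ?thesis using 1 by simp
next
  case (2 j)
  then have "i = j" using assms(2,3) vertex_edge_value_eq[of i j] morse_fun_edge by simp
  then show ?thesis using 2 by simp
qed

lemma morse_fun_eq_edge_value:
  assumes "\<tau> \<in> S" "i < length vs" "morse_fun \<tau> = edge_value i"
  shows "\<tau> \<in> {{vs ! i}, edge i}"
  using assms(1)
proof (cases rule: simplex_cases)
  case (1 j)
  then have "j = i" using assms(2,3) vertex_edge_value_eq[of j i] morse_fun_vertex by simp
  then show ?thesis using 1 by simp
next
  case (2 j)
  then have "j = i" using assms(2,3) edge_value_inj morse_fun_edge by metis
  then show ?thesis using 2 by simp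
qed

lemma morse_fun_level_subset:
  assumes "\<sigma> \<in> S"
  obtains i where "{\<tau> \<in> S. morse_fun \<tau> = morse_fun \<sigma>} \<subseteq> {{vs ! i}, edge i}"
  using assms
proof (cases rule: simplex_cases)
  case (1 i)
  then show ?thesis using morse_fun_eq_vertex_value morse_fun_vertex by (intro that[of i]) auto
next
  case (2 i)
  then show ?thesis using morse_fun_eq_edge_value morse_fun_edge by (intro that[of i]) auto
qed

lemma morse_fun_level_card: "card {\<sigma> \<in> S. morse_fun \<sigma> = x} \<le> 2"
proof (cases "\<exists>\<sigma>\<in>S. morse_fun \<sigma> = x")
  case True
  then obtain \<sigma> where \<sigma>: "\<sigma> \<in> S" "x = morse_fun \<sigma>" by blast
  obtain i where "{\<tau> \<in> S. morse_fun \<tau> = morse_fun \<sigma>} \<subseteq> {{vs ! i}, edge i}"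
    by (rule morse_fun_level_subset[OF \<sigma>(1)])
  then have "card {\<tau> \<in> S. morse_fun \<tau> = x} \<le> card {{vs ! i}, edge i}"
    unfolding \<sigma>(2) by (intro card_mono) simp_all
  also have "\<dots> \<le> 2" by (simp add: card_insert_le_m1)
  finally show ?thesis .
next
  case False
  then have empty: "{\<sigma> \<in> S. morse_fun \<sigma> = x} = {}" by auto
  show ?thesis unfolding empty by simp
qed

lemma morse_fun_eq_face:
  assumes "\<sigma> \<in> S" "\<tau> \<in> S" "\<sigma> \<noteq> \<tau>" "morse_fun \<sigma> = morse_fun \<tau>"
  shows "\<sigma> \<subset> \<tau> \<or> \<tau> \<subset> \<sigma>"
proof -
  obtain i where i: "0 < i" "i \<le> m" "{\<sigma>, \<tau>} = {{vs ! i}, edge i}"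
    using morse_fun_eq_cases[OF assms] .
  then have "{vs ! i} \<subset> edge i"
    using m_less_length vertex_ne_edge[of i] by (auto simp: parent_edge_def)
  then show ?thesis using i(3) by (auto simp: doubleton_eq_iff)
qed

lemma critical_values_morse_fun:
  "critical_values S morse_fun = insert 0 (vertex_value ` pair_indices \<union> edge_value ` pair_indices)"
proof -
  have "critical_values S morse_fun = morse_fun ` {\<sigma> \<in> S. \<not> regular \<sigma>}"
    unfolding critical_values_def using unique_value_iff_not_regular by blast
  also have "{\<sigma> \<in> S. \<not> regular \<sigma>} = insert {vs ! 0} ((\<lambda>i. {vs ! i}) ` pair_indices \<union> edge ` pair_indices)"
  proof -
    have "\<sigma> \<in> S \<and> \<not> regular \<sigma> \<longleftrightarrow>
        \<sigma> = {vs ! 0} \<or> (\<exists>i\<in>pair_indices. \<sigma> = {vs ! i} \<or> \<sigma> = edge i)" for \<sigma>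
      unfolding simplices_parent_order pair_indices_def using vs_nonempty
      by (auto simp: regular_vertex_iff regular_edge_iff not_le)
    then show ?thesis by blast
  qed
  finally show ?thesis
    using vs_nonempty vertex_value_0
    by (auto simp: pair_indices_def morse_fun_vertex morse_fun_edge image_Un image_image)
qed

lemma critical_values_nat: "x \<in> critical_values S morse_fun \<Longrightarrow> x \<in> \<nat>"
  unfolding critical_values_morse_fun using high_values(1,2) by auto

theorem discrete_morse_morse_fun: "discrete_morse (set vs) (parent_edges vs par) morse_fun"
proof -
  have "\<forall>\<sigma>\<in>S. 0 \<le> morse_fun \<sigma> \<and> morse_fun \<sigma> \<le> real (card S)"
    using morse_fun_range by blast
  moreover have "\<forall>v\<in>set vs. \<forall>e\<in>parent_edges vs par. v \<in> e \<longrightarrow> morse_fun {v} \<le> morse_fun e"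
    using morse_fun_face_le by blast
  moreover have "\<exists>\<sigma>\<in>S. morse_fun \<sigma> = 0"
    using vs_nonempty vertex_value_0 morse_fun_vertex[of 0] by (auto simp: simplices_parent_order)
  moreover have "\<forall>x. card {\<sigma> \<in> S. morse_fun \<sigma> = x} \<le> 2"
    using morse_fun_level_card by blast
  moreover have "\<forall>\<sigma>\<in>S. \<forall>\<tau>\<in>S. \<sigma> \<noteq> \<tau> \<and> morse_fun \<sigma> = morse_fun \<tau> \<longrightarrow> \<sigma> \<subset> \<tau> \<or> \<tau> \<subset> \<sigma>"
    using morse_fun_eq_face by blast
  moreover have "\<forall>\<sigma>\<in>S. (\<forall>\<tau>\<in>S. morse_fun \<tau> = morse_fun \<sigma> \<longrightarrow> \<tau> = \<sigma>) \<longrightarrow> morse_fun \<sigma> \<in> \<nat>"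
    using critical_values_nat unfolding critical_values_def by blast
  ultimately show ?thesis unfolding discrete_morse_def Let_def by (intro conjI)
qed

lemma rank_H0_morse_levels:
  assumes "0 \<le> s" "s \<le> t"
  shows "int (rank_H0 (level S morse_fun s) (level S morse_fun t)) =
    1 + (\<Sum>i\<in>pair_indices. of_bool (vertex_value i \<le> s \<and> t < edge_value i))"
proof -
  have "{i. 0 < i \<and> i < length vs \<and> morse_fun {vs ! i} \<le> s \<and> t < morse_fun (edge i)} =
      {i \<in> pair_indices. vertex_value i \<le> s \<and> t < edge_value i}"
    using assms low_values(1) unfolding pair_indices_def
    by (force simp: morse_fun_vertex morse_fun_edge not_le)
  moreover have "rank_H0 (level S morse_fun s) (level S morse_fun t) =
      Suc (card {i. 0 < i \<and> i < length vs \<and> morse_fun {vs ! i} \<le> s \<and> t < morse_fun (edge i)})"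
  proof (rule rank_H0_level)
    show "morse_fun (edge (par i)) < morse_fun (edge i)" if "0 < i" "i < length vs" "0 < par i" for i
      using that par_less[of i] edge_value_parent_less[OF that] by (simp add: morse_fun_edge)
    show "morse_fun {vs ! 0} \<le> s" using assms vs_nonempty vertex_value_0 by (simp add: morse_fun_vertex)
  qed (fact assms(2))
  moreover have "finite pair_indices" unfolding pair_indices_def by simp
  ultimately show ?thesis by (simp add: Int_def)
qed

lemma mset_set_D: "mset_set D = (\<Sum>i\<in>pair_indices. {#(vertex_value i, ereal (edge_value i))#}) + {#(0, PInfty)#}"
proof -
  have "mset_set pairs = (\<Sum>p\<in>pairs. {#p#})" by simp
  also have "\<dots> = (\<Sum>i\<in>pair_indices. {#pair_of i#})"
    by (rule sum.reindex_bij_betw[OF bij_pair_of, symmetric])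
  also have "\<dots> = (\<Sum>i\<in>pair_indices. {#(vertex_value i, ereal (edge_value i))#})"
    by (intro sum.cong refl) (simp add: pair_of_eq)
  finally have "mset_set pairs = (\<Sum>i\<in>pair_indices. {#(vertex_value i, ereal (edge_value i))#})" .
  moreover have "mset_set D = add_mset (0, PInfty) (mset_set pairs)"
    using consistent unfolding consistent_diagram_def pairs_def by (simp add: mset_set.remove)
  ultimately show ?thesis by simp
qed

theorem morse_diagram_morse_fun: "morse_diagram (set vs) (parent_edges vs par) morse_fun = mset_set D"
proof -
  define C where "C = critical_values S morse_fun"
  define cs where "cs = sorted_list_of_set C"
  have C_eq: "C = insert 0 (vertex_value ` pair_indices \<union> edge_value ` pair_indices)"
    unfolding C_def by (rule critical_values_morse_fun)
  have finite_C: "finite C" unfolding C_eq pair_indices_def by simp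
  have set_cs: "set cs = C" unfolding cs_def using finite_C by simp
  have C_nonneg: "0 \<le> x" if "x \<in> C" for x
    using critical_values_nat[of x] that unfolding C_def by (simp add: Nats_altdef2)
  have "Min C = 0" using C_nonneg finite_C by (intro Min_eqI) (auto simp: C_eq)
  then have cs0: "cs ! 0 = 0" and cs_nonempty: "cs \<noteq> []"
    unfolding cs_def using finite_C by (auto simp: sorted_list_of_set_nonempty C_eq)
  have "pers_diagram (map (level S morse_fun) cs) cs =
      (\<Sum>i\<in>pair_indices. {#(vertex_value i, ereal (edge_value i))#}) + {#(cs ! 0, PInfty)#}"
  proof (rule pers_diagram_from_pbetti)
    show "sorted_wrt (<) cs" unfolding cs_def by simp
    show "finite pair_indices" unfolding pair_indices_def by simp
    show "vertex_value i \<in> set cs" "edge_value i \<in> set cs" if "i \<in> pair_indices" for i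
      using that unfolding set_cs C_eq by auto
    show "cs ! 0 < vertex_value i" "vertex_value i < edge_value i" if "i \<in> pair_indices" for i
      using high_values(3,4)[OF that] cs0 by simp_all
    show "pbetti (map (level S morse_fun) cs) i j =
        1 + (\<Sum>u\<in>pair_indices. of_bool (vertex_value u \<le> cs ! i \<and> cs ! j < edge_value u))"
      if "i \<le> j" "j < length cs" for i j
    proof -
      have "0 \<le> cs ! i" using C_nonneg that set_cs by (metis le_less_trans nth_mem)
      moreover have "cs ! i \<le> cs ! j"
        using strict_sorted_nth_le_iff[of cs i j] that unfolding cs_def by simp
      ultimately show ?thesis unfolding pbetti_def using that rank_H0_morse_levels by simp
    qed
  qed (use cs_nonempty in simp_all)
  then show ?thesis
    unfolding morse_diagram_def Let_def C_def[symmetric] cs_def[symmetric] mset_set_D cs0 .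
qed

end

theorem theorem4p8:
  fixes V :: "'a set" and E :: "'a set set" and D :: "(real \<times> ereal) set"
  assumes "is_tree V E"
    and "consistent_diagram D (card (simplices V E))"
  shows "\<exists>f. discrete_morse V E f \<and> morse_diagram V E f = mset_set D"
proof -
  obtain vs par where order: "parent_order vs par" and V: "set vs = V" and E: "E = parent_edges vs par"
    by (rule tree_parent_order[OF assms(1)])
  interpret diagram_realisation vs par D
    using order assms(2) V E by (simp add: diagram_realisation_def diagram_realisation_axioms_def)
  show ?thesis using discrete_morse_morse_fun morse_diagram_morse_fun V E by blast
qed

end
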